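(* Let $(\mathbf{P}_t)_{t\ge0}$ be a continuous-time Markov process on a countable state space $\mathcal{S}$ with stable conservative $Q$-matrix $Q=(q_{ij})$ satisfying $\sup_{i\in\mathcal{S}}q_i<\infty$. Then for every $t\ge0$, $$\inf_{i\ne j}\|\mathbf{p}^i(t)-\mathbf{p}^j(t)\|_{\mathrm{TV}}\ge\exp(-t\|Q\|)>0,$$ where $\|Q\|=\sup_i\sum_j|q_{ij}|=\sup_i2q_i$. In particular the process is initial-state identifiable.
   Context: $\mathbf{P}_t=(p_{ij}(t))$ is the transition matrix, $\mathbf{p}^i(t)$ its $i$-th row, $q_{ij}=p'_{ij}(0)\ge0$ for $i\ne j$, $q_i=-q_{ii}=\sum_{j\ne i}q_{ij}$. $\|\mu_1-\mu_2\|_{\mathrm{TV}}=\frac12\sum_\sigma|\mu_1(\sigma)-\mu_2(\sigma)|$. Initial-state identifiability: for every $t\in[0,\infty)$ all rows of $\mathbf{P}_t$ are distinct. *)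

theory Defs
  imports "HOL-Analysis.Analysis"
begin

definition transition_function :: "(real \<Rightarrow> 'a::countable \<Rightarrow> 'a \<Rightarrow> real) \<Rightarrow> bool" where
  "transition_function P \<longleftrightarrow>
     (\<forall>t\<ge>0. \<forall>i j. P t i j \<ge> 0) \<and>
     (\<forall>t\<ge>0. \<forall>i. ((\<lambda>j. P t i j) has_sum 1) UNIV) \<and>
     (\<forall>i j. P 0 i j = (if i = j then 1 else 0)) \<and>
     (\<forall>s\<ge>0. \<forall>t\<ge>0. \<forall>i j. P (s + t) i j = (\<Sum>\<^sub>\<infinity>k. P s i k * P t k j)) \<and>
     (\<forall>i j. ((\<lambda>t. P t i j) \<longlongrightarrow> P 0 i j) (at_right 0))"

definition is_Q_matrix_of :: "('a \<Rightarrow> 'a \<Rightarrow> real) \<Rightarrow> (real \<Rightarrow> 'a \<Rightarrow> 'a \<Rightarrow> real) \<Rightarrow> bool" where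
  "is_Q_matrix_of q P \<longleftrightarrow>
     (\<forall>i j. ((\<lambda>t. P t i j) has_real_derivative q i j) (at 0 within {0..}))"

text \<open>q_i = - q_ii; stable (finite, automatic for real entries) and conservative:
  q_i = \<Sum>_{j \<noteq> i} q_ij.\<close>
definition conservative :: "('a \<Rightarrow> 'a \<Rightarrow> real) \<Rightarrow> bool" where
  "conservative q \<longleftrightarrow> (\<forall>i. ((\<lambda>j. q i j) has_sum (- q i i)) (UNIV - {i}))"

definition Q_norm :: "('a \<Rightarrow> 'a \<Rightarrow> real) \<Rightarrow> real" where
  "Q_norm q = (SUP i. (\<Sum>\<^sub>\<infinity>j. \<bar>q i j\<bar>))"

definition tv_dist :: "('a \<Rightarrow> real) \<Rightarrow> ('a \<Rightarrow> real) \<Rightarrow> real" where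
  "tv_dist \<mu>1 \<mu>2 = (1/2) * (\<Sum>\<^sub>\<infinity>\<sigma>. \<bar>\<mu>1 \<sigma> - \<mu>2 \<sigma>\<bar>)"

definition initial_state_identifiable :: "(real \<Rightarrow> 'a \<Rightarrow> 'a \<Rightarrow> real) \<Rightarrow> bool" where
  "initial_state_identifiable P \<longleftrightarrow>
     (\<forall>t\<ge>0. \<forall>i j. i \<noteq> j \<longrightarrow> (\<lambda>k. P t i k) \<noteq> (\<lambda>k. P t j k))"

end

theory Submission
  imports Defs
begin

(* Let c bound the exit rates -q_ii, so that ||Q|| = 2c. Since p_ii(h)^n <= p_ii(nh) and
   p_ii'(0) = q_ii, every diagonal entry satisfies p_ii(t) >= exp(q_ii t) >= exp(-ct).
   A stochastic matrix with diagonal entries at least m moves at most the mass 1 - m of each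
   row off the diagonal, so it shrinks the l1-norm of a signed vector by at most the factor
   2m - 1. Applied to p^i - p^j over n steps of length t/n this gives
   ||p^i(t) - p^j(t)||_TV >= (2 exp(-ct/n) - 1)^n >= (1 - 2ct/n)^n, which tends to exp(-2ct). *)

lemma has_sum_diff:
  fixes f g :: "'a \<Rightarrow> 'b::topological_ab_group_add"
  assumes "(f has_sum a) A" and "(g has_sum b) A"
  shows "((\<lambda>x. f x - g x) has_sum (a - b)) A"
proof -
  have "((\<lambda>x. - g x) has_sum - b) A"
    using assms(2) by (simp add: has_sum_uminus)
  from has_sum_add[OF assms(1) this] show ?thesis
    by simp
qed

lemma has_sum_sum:
  fixes f :: "'i \<Rightarrow> 'a \<Rightarrow> 'b::topological_comm_monoid_add"
  assumes "finite I" and "\<And>i. i \<in> I \<Longrightarrow> (f i has_sum S i) A"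
  shows "((\<lambda>x. \<Sum>i\<in>I. f i x) has_sum (\<Sum>i\<in>I. S i)) A"
  using assms by (induction I rule: finite_induct) (auto intro: has_sum_add)

lemma exp_le_if_eventually_power_le:
  fixes x C :: real
  assumes "\<forall>\<^sub>F n in sequentially. (1 + x / real n) ^ n \<le> C"
  shows "exp x \<le> C"
  using tendsto_exp_limit_sequentially assms by (rule tendsto_upperbound) simp

lemma supermultiplicative_exp_minus_eps_le:
  fixes f :: "real \<Rightarrow> real"
  assumes super: "\<And>h n. h \<ge> 0 \<Longrightarrow> f h ^ n \<le> f (real n * h)"
    and deriv: "((\<lambda>h. (f h - 1) / h) \<longlongrightarrow> a) (at_right 0)"
    and t: "t > 0" and \<epsilon>: "\<epsilon> > 0"
  shows "exp ((a - \<epsilon>) * t) \<le> f t"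
proof -
  obtain b where b: "b > 0" and quot: "\<And>h. 0 < h \<Longrightarrow> h < b \<Longrightarrow> a - \<epsilon> < (f h - 1) / h"
    using order_tendstoD(1)[OF deriv, of "a - \<epsilon>"] \<epsilon> unfolding eventually_at_right_field by auto
  have "\<forall>\<^sub>F n in sequentially. max (t / b) ((\<epsilon> - a) * t) < real n"
    using filterlim_real_sequentially filterlim_at_top_dense by blast
  then have "\<forall>\<^sub>F n in sequentially. (1 + (a - \<epsilon>) * t / real n) ^ n \<le> f t"
  proof (rule eventually_mono)
    fix n assume n: "max (t / b) ((\<epsilon> - a) * t) < real n"
    have n_pos: "real n > 0"
      using n t b by (smt (verit) divide_pos_pos)
    define h where "h = t / real n"
    have h: "0 < h" "h < b"
      using n n_pos t b by (auto simp: h_def divide_less_eq mult.commute pos_divide_less_eq)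
    have "1 + (a - \<epsilon>) * h \<le> f h"
      using quot[OF h] h by (simp add: less_divide_eq)
    moreover have "0 \<le> 1 + (a - \<epsilon>) * h"
      using n n_pos by (simp add: h_def field_simps)
    ultimately have "(1 + (a - \<epsilon>) * h) ^ n \<le> f h ^ n"
      by (intro power_mono)
    also have "\<dots> \<le> f t"
      using super[of h n] h n_pos by (simp add: h_def)
    finally show "(1 + (a - \<epsilon>) * t / real n) ^ n \<le> f t"
      by (simp add: h_def)
  qed
  then show ?thesis
    by (rule exp_le_if_eventually_power_le)
qed

lemma supermultiplicative_exp_le:
  fixes f :: "real \<Rightarrow> real"
  assumes super: "\<And>h n. h \<ge> 0 \<Longrightarrow> f h ^ n \<le> f (real n * h)"
    and deriv: "((\<lambda>h. (f h - 1) / h) \<longlongrightarrow> a) (at_right 0)"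
    and t: "t \<ge> 0"
  shows "exp (a * t) \<le> f t"
proof (cases "t = 0")
  case True
  then show ?thesis
    using super[of 0 0] by simp
next
  case False
  have "((\<lambda>\<epsilon>. exp ((a - \<epsilon>) * t)) \<longlongrightarrow> exp ((a - 0) * t)) (at_right 0)"
    by (intro tendsto_intros)
  moreover have "\<forall>\<^sub>F \<epsilon> in at_right 0. exp ((a - \<epsilon>) * t) \<le> f t"
    using supermultiplicative_exp_minus_eps_le[OF super deriv] False t
    by (auto simp: eventually_at_right_field intro: exI[of _ 1])
  ultimately show ?thesis
    by (simp add: tendsto_upperbound)
qed

lemma transition_function_nonneg:
  "transition_function P \<Longrightarrow> t \<ge> 0 \<Longrightarrow> 0 \<le> P t i j"
  unfolding transition_function_def by blast

lemma transition_function_row_has_sum: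
  "transition_function P \<Longrightarrow> t \<ge> 0 \<Longrightarrow> ((\<lambda>j. P t i j) has_sum 1) UNIV"
  unfolding transition_function_def by blast

lemma transition_function_at_0:
  "transition_function P \<Longrightarrow> P 0 i j = (if i = j then 1 else 0)"
  unfolding transition_function_def by blast

lemma stochastic_entry_le_one:
  fixes K :: "'a \<Rightarrow> 'a \<Rightarrow> real"
  assumes "\<And>k. 0 \<le> K l k" and "(K l has_sum 1) UNIV"
  shows "K l k \<le> 1"
  using finite_sum_le_has_sum[OF assms(2), of "{k}"] assms(1) by simp

lemma transition_function_le_one:
  assumes "transition_function P" and "t \<ge> 0"
  shows "P t i j \<le> 1"
  using transition_function_nonneg[OF assms] transition_function_row_has_sum[OF assms]
  by (rule stochastic_entry_le_one)

lemma chapman_kolmogorov_has_sum: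
  assumes tf: "transition_function P" and s: "s \<ge> 0" and t: "t \<ge> 0"
  shows "((\<lambda>k. P s i k * P t k j) has_sum P (s + t) i j) UNIV"
proof -
  have "(\<lambda>k. P s i k * P t k j) summable_on UNIV"
  proof (rule summable_on_comparison_test)
    show "(\<lambda>k. P s i k) summable_on UNIV"
      using transition_function_row_has_sum[OF tf s] by (rule has_sum_imp_summable)
    show "P s i k * P t k j \<le> P s i k" "0 \<le> P s i k * P t k j" for k
      using transition_function_nonneg[OF tf] transition_function_le_one[OF tf t] s t
      by (simp_all add: mult_left_le)
  qed
  moreover have "P (s + t) i j = (\<Sum>\<^sub>\<infinity>k. P s i k * P t k j)"
    using tf s t unfolding transition_function_def by blast
  ultimately show ?thesis
    by (simp add: summable_iff_has_sum_infsum)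
qed

lemma transition_function_diag_power_le:
  assumes tf: "transition_function P" and h: "h \<ge> 0"
  shows "P h i i ^ n \<le> P (real n * h) i i"
proof (induction n)
  case 0
  then show ?case
    using transition_function_at_0[OF tf] by simp
next
  case (Suc n)
  have "P h i i ^ Suc n \<le> P h i i * P (real n * h) i i"
    using Suc transition_function_nonneg[OF tf h] by (simp add: mult_left_mono)
  also have "\<dots> = (\<Sum>k\<in>{i}. P h i k * P (real n * h) k i)"
    by simp
  also have "\<dots> \<le> P (h + real n * h) i i"
    by (rule finite_sum_le_has_sum[OF chapman_kolmogorov_has_sum[OF tf h]])
       (use transition_function_nonneg[OF tf] h in auto)
  finally show ?case
    by (simp add: algebra_simps)
qed

lemma Q_matrix_difference_quotient:
  assumes "is_Q_matrix_of q P"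
  shows "((\<lambda>h. (P h i j - P 0 i j) / h) \<longlongrightarrow> q i j) (at_right 0)"
proof -
  have "((\<lambda>h. (P h i j - P 0 i j) / (h - 0)) \<longlongrightarrow> q i j) (at 0 within {0..})"
    using assms unfolding is_Q_matrix_of_def has_field_derivative_iff by blast
  then have "((\<lambda>h. (P h i j - P 0 i j) / (h - 0)) \<longlongrightarrow> q i j) (at_right 0)"
    by (rule tendsto_mono[rotated]) (auto intro: at_le)
  then show ?thesis
    by simp
qed

lemma Q_matrix_offdiag_nonneg:
  assumes tf: "transition_function P" and Q: "is_Q_matrix_of q P" and "i \<noteq> j"
  shows "0 \<le> q i j"
proof (rule tendsto_lowerbound[OF Q_matrix_difference_quotient[OF Q]])
  show "\<forall>\<^sub>F h in at_right 0. 0 \<le> (P h i j - P 0 i j) / h"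
    using transition_function_nonneg[OF tf] transition_function_at_0[OF tf] \<open>i \<noteq> j\<close>
    by (auto simp: eventually_at_right_field intro: exI[of _ 1])
qed simp

lemma Q_matrix_diag_nonpos:
  assumes tf: "transition_function P" and Q: "is_Q_matrix_of q P"
  shows "q i i \<le> 0"
proof (rule tendsto_upperbound[OF Q_matrix_difference_quotient[OF Q]])
  show "\<forall>\<^sub>F h in at_right 0. (P h i i - P 0 i i) / h \<le> 0"
    using transition_function_le_one[OF tf] transition_function_at_0[OF tf]
    by (auto simp: eventually_at_right_field divide_nonpos_pos intro: exI[of _ 1])
qed simp

lemma Q_matrix_row_abs_sum:
  assumes tf: "transition_function P" and Q: "is_Q_matrix_of q P" and C: "conservative q"
  shows "(\<Sum>\<^sub>\<infinity>j. \<bar>q i j\<bar>) = 2 * - q i i"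
proof -
  have "((\<lambda>j. q i j) has_sum - q i i) (UNIV - {i})"
    using C unfolding conservative_def by blast
  then have "((\<lambda>j. \<bar>q i j\<bar>) has_sum - q i i) (UNIV - {i})"
    using Q_matrix_offdiag_nonneg[OF tf Q] by (subst has_sum_cong) auto
  then have "((\<lambda>j. \<bar>q i j\<bar>) has_sum \<bar>q i i\<bar> + - q i i) (insert i (UNIV - {i}))"
    by (intro has_sum_insert) auto
  then show ?thesis
    using Q_matrix_diag_nonpos[OF tf Q, of i] by (simp add: insert_UNIV infsumI)
qed

lemma transition_function_diag_ge_exp:
  assumes tf: "transition_function P" and Q: "is_Q_matrix_of q P" and t: "t \<ge> 0"
  shows "exp (q i i * t) \<le> P t i i"
proof (rule supermultiplicative_exp_le[where f = "\<lambda>h. P h i i", OF _ _ t])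
  show "P h i i ^ n \<le> P (real n * h) i i" if "h \<ge> 0" for h n
    using transition_function_diag_power_le[OF tf that] .
  show "((\<lambda>h. (P h i i - 1) / h) \<longlongrightarrow> q i i) (at_right 0)"
    using Q_matrix_difference_quotient[OF Q, of i i] transition_function_at_0[OF tf] by simp
qed

lemma kernel_column_estimate:
  fixes D K :: "'a \<Rightarrow> real"
  assumes K_nonneg: "\<And>l. 0 \<le> K l"
    and off_diagonal: "(\<lambda>l. if l = k then 0 else \<bar>D l\<bar> * K l) summable_on UNIV"
    and column: "((\<lambda>l. D l * K l) has_sum e) UNIV"
  shows "\<bar>D k\<bar> * K k \<le> \<bar>e\<bar> + (\<Sum>\<^sub>\<infinity>l. if l = k then 0 else \<bar>D l\<bar> * K l)"
proof -
  define H where "H l = (if l = k then 0 else D l * K l)" for l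
  have "((\<lambda>l. if l = k then D k * K k else 0) has_sum D k * K k) UNIV"
    by (rule has_sum_cong_neutral[THEN iffD2, of "{k}"]) (auto intro: has_sum_finiteI)
  from has_sum_diff[OF column this] have "(H has_sum e - D k * K k) UNIV"
    by (rule has_sum_cong[THEN iffD1, rotated]) (auto simp: H_def)
  moreover have "norm (H l) = (if l = k then 0 else \<bar>D l\<bar> * K l)" for l
    by (simp add: H_def abs_mult K_nonneg)
  ultimately have "\<bar>e - D k * K k\<bar> \<le> (\<Sum>\<^sub>\<infinity>l. if l = k then 0 else \<bar>D l\<bar> * K l)"
    using norm_infsum_bound[of H UNIV] off_diagonal by (simp add: infsumI)
  then show ?thesis
    by (simp add: abs_mult K_nonneg)
qed

lemma kernel_off_diagonal_mass:
  fixes D :: "'a \<Rightarrow> real" and K :: "'a \<Rightarrow> 'a \<Rightarrow> real"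
  assumes K_nonneg: "\<And>l k. 0 \<le> K l k"
    and K_row: "\<And>l. (K l has_sum 1) UNIV"
    and K_diag: "\<And>l. m \<le> K l l"
    and D: "(\<lambda>l. \<bar>D l\<bar>) summable_on UNIV"
    and F: "finite F"
  shows "(\<Sum>k\<in>F. \<Sum>\<^sub>\<infinity>l. if l = k then 0 else \<bar>D l\<bar> * K l k) \<le> (1 - m) * (\<Sum>\<^sub>\<infinity>l. \<bar>D l\<bar>)"
proof -
  define G where "G k l = (if l = k then 0 else \<bar>D l\<bar> * K l k)" for k l
  have row: "(\<Sum>k\<in>F. G k l) \<le> \<bar>D l\<bar> * (1 - m)" for l
  proof -
    have "(\<Sum>k\<in>insert l (F - {l}). K l k) \<le> 1"
      by (rule finite_sum_le_has_sum[OF K_row]) (use F K_nonneg in auto)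
    then have "(\<Sum>k\<in>F - {l}. K l k) \<le> 1 - m"
      using F K_diag[of l] by (simp add: sum.insert_remove)
    moreover have "(\<Sum>k\<in>F. G k l) = \<bar>D l\<bar> * (\<Sum>k\<in>F - {l}. K l k)"
      using F by (simp add: G_def sum_distrib_left sum.If_cases Diff_eq Int_commute)
    ultimately show ?thesis
      by (simp add: mult_left_mono)
  qed
  have "G k summable_on UNIV" for k
    by (rule summable_on_comparison_test[OF D])
       (auto simp: G_def intro!: mult_left_le mult_nonneg_nonneg stochastic_entry_le_one[OF K_nonneg K_row] K_nonneg)
  then have swap: "((\<lambda>l. \<Sum>k\<in>F. G k l) has_sum (\<Sum>k\<in>F. \<Sum>\<^sub>\<infinity>l. G k l)) UNIV"
    using F by (intro has_sum_sum) auto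
  then have "(\<Sum>k\<in>F. \<Sum>\<^sub>\<infinity>l. G k l) = (\<Sum>\<^sub>\<infinity>l. \<Sum>k\<in>F. G k l)"
    by (simp add: infsumI)
  also have "\<dots> \<le> (\<Sum>\<^sub>\<infinity>l. \<bar>D l\<bar> * (1 - m))"
    using swap D row by (intro infsum_mono) (auto intro: has_sum_imp_summable summable_on_cmult_left)
  also have "\<dots> = (1 - m) * (\<Sum>\<^sub>\<infinity>l. \<bar>D l\<bar>)"
    by (simp add: infsum_cmult_left' mult.commute)
  finally show ?thesis
    by (simp add: G_def)
qed

lemma l1_norm_kernel_image_ge:
  fixes D E :: "'a \<Rightarrow> real" and K :: "'a \<Rightarrow> 'a \<Rightarrow> real"
  assumes K_nonneg: "\<And>l k. 0 \<le> K l k"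
    and K_row: "\<And>l. (K l has_sum 1) UNIV"
    and K_diag: "\<And>l. m \<le> K l l"
    and D: "D summable_on UNIV"
    and E: "\<And>k. ((\<lambda>l. D l * K l k) has_sum E k) UNIV"
    and E_summable: "E summable_on UNIV"
  shows "(2 * m - 1) * (\<Sum>\<^sub>\<infinity>k. \<bar>D k\<bar>) \<le> (\<Sum>\<^sub>\<infinity>k. \<bar>E k\<bar>)"
proof -
  define N where "N = (\<Sum>\<^sub>\<infinity>k. \<bar>D k\<bar>)"
  define G where "G k = (\<Sum>\<^sub>\<infinity>l. if l = k then 0 else \<bar>D l\<bar> * K l k)" for k
  have abs_D: "(\<lambda>k. \<bar>D k\<bar>) summable_on UNIV"
    using D summable_on_iff_abs_summable_on_real by auto
  have abs_E: "(\<lambda>k. \<bar>E k\<bar>) summable_on UNIV"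
    using E_summable summable_on_iff_abs_summable_on_real by auto
  have column: "\<bar>D k\<bar> * K k k \<le> \<bar>E k\<bar> + G k" for k
    unfolding G_def
  proof (rule kernel_column_estimate[OF K_nonneg _ E])
    show "(\<lambda>l. if l = k then 0 else \<bar>D l\<bar> * K l k) summable_on UNIV"
      by (rule summable_on_comparison_test[OF abs_D])
         (auto intro!: mult_left_le mult_nonneg_nonneg stochastic_entry_le_one[OF K_nonneg K_row] K_nonneg)
  qed
  have "(\<Sum>\<^sub>\<infinity>k. m * \<bar>D k\<bar>) \<le> (\<Sum>\<^sub>\<infinity>k. \<bar>E k\<bar>) + (1 - m) * N"
  proof (rule infsum_le_finite_sums[OF summable_on_cmult_right[OF abs_D]])
    fix F :: "'a set" assume F: "finite F"
    have "(\<Sum>k\<in>F. m * \<bar>D k\<bar>) \<le> (\<Sum>k\<in>F. \<bar>E k\<bar> + G k)"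
      by (intro sum_mono order.trans[OF _ column]) (metis K_diag abs_ge_zero mult.commute mult_left_mono)
    also have "\<dots> = (\<Sum>k\<in>F. \<bar>E k\<bar>) + (\<Sum>k\<in>F. G k)"
      by (rule sum.distrib)
    also have "(\<Sum>k\<in>F. \<bar>E k\<bar>) \<le> (\<Sum>\<^sub>\<infinity>k. \<bar>E k\<bar>)"
      using F abs_E by (intro finite_sum_le_infsum) auto
    finally show "(\<Sum>k\<in>F. m * \<bar>D k\<bar>) \<le> (\<Sum>\<^sub>\<infinity>k. \<bar>E k\<bar>) + (1 - m) * N"
      using kernel_off_diagonal_mass[OF K_nonneg K_row K_diag abs_D F] by (simp add: G_def N_def)
  qed
  then show ?thesis
    by (simp add: N_def infsum_cmult_right' algebra_simps)
qed

lemma tv_dist_rows_at_0: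
  assumes tf: "transition_function P" and "i \<noteq> j"
  shows "tv_dist (\<lambda>k. P 0 i k) (\<lambda>k. P 0 j k) = 1"
proof -
  have "((\<lambda>k. \<bar>P 0 i k - P 0 j k\<bar>) has_sum 2) UNIV"
    by (rule has_sum_cong_neutral[THEN iffD2, of "{i, j}"])
       (use \<open>i \<noteq> j\<close> transition_function_at_0[OF tf] in \<open>auto intro: has_sum_finiteI\<close>)
  then show ?thesis
    by (simp add: tv_dist_def infsumI)
qed

lemma tv_dist_rows_step:
  assumes tf: "transition_function P" and s: "s \<ge> 0" and t: "t \<ge> 0"
    and diag: "\<And>l. m \<le> P s l l"
  shows "(2 * m - 1) * tv_dist (\<lambda>k. P t i k) (\<lambda>k. P t j k)
           \<le> tv_dist (\<lambda>k. P (t + s) i k) (\<lambda>k. P (t + s) j k)"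
proof -
  have "(2 * m - 1) * (\<Sum>\<^sub>\<infinity>k. \<bar>P t i k - P t j k\<bar>) \<le> (\<Sum>\<^sub>\<infinity>k. \<bar>P (t + s) i k - P (t + s) j k\<bar>)"
  proof (rule l1_norm_kernel_image_ge[where K = "P s"])
    have row_diff_summable: "(\<lambda>k. P r i k - P r j k) summable_on UNIV" if "r \<ge> 0" for r
      using has_sum_diff[OF transition_function_row_has_sum[OF tf that] transition_function_row_has_sum[OF tf that]]
      by (rule has_sum_imp_summable)
    then show "(\<lambda>k. P t i k - P t j k) summable_on UNIV" "(\<lambda>k. P (t + s) i k - P (t + s) j k) summable_on UNIV"
      using s t by simp_all
    show "((\<lambda>l. (P t i l - P t j l) * P s l k) has_sum P (t + s) i k - P (t + s) j k) UNIV" for k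
      using has_sum_diff[OF chapman_kolmogorov_has_sum[OF tf t s] chapman_kolmogorov_has_sum[OF tf t s]]
      by (simp add: left_diff_distrib)
  qed (use transition_function_nonneg[OF tf s] transition_function_row_has_sum[OF tf s] diag in auto)
  then show ?thesis
    by (simp add: tv_dist_def)
qed

lemma tv_dist_rows_power:
  assumes tf: "transition_function P" and "i \<noteq> j" and h: "h \<ge> 0"
    and m: "2 * m - 1 \<ge> 0" and diag: "\<And>l. m \<le> P h l l"
  shows "(2 * m - 1) ^ n \<le> tv_dist (\<lambda>k. P (real n * h) i k) (\<lambda>k. P (real n * h) j k)"
proof (induction n)
  case 0
  then show ?case
    using tv_dist_rows_at_0[OF tf \<open>i \<noteq> j\<close>] by simp
next
  case (Suc n)
  have "(2 * m - 1) ^ Suc n \<le> (2 * m - 1) * tv_dist (\<lambda>k. P (real n * h) i k) (\<lambda>k. P (real n * h) j k)"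
    using Suc m by (simp add: mult_left_mono)
  also have "\<dots> \<le> tv_dist (\<lambda>k. P (real n * h + h) i k) (\<lambda>k. P (real n * h + h) j k)"
    using h by (intro tv_dist_rows_step[OF tf h _ diag]) simp
  finally show ?case
    by (simp add: algebra_simps)
qed

lemma tv_dist_rows_ge_power:
  assumes tf: "transition_function P" and Q: "is_Q_matrix_of q P"
    and c: "\<And>l. - q l l \<le> c" and t: "t \<ge> 0" and "i \<noteq> j" and n: "2 * c * t < real n"
  shows "(1 - 2 * c * t / real n) ^ n \<le> tv_dist (\<lambda>k. P t i k) (\<lambda>k. P t j k)"
proof -
  have "0 \<le> c"
    using c[of undefined] Q_matrix_diag_nonpos[OF tf Q, of undefined] by linarith
  then have n_pos: "real n > 0"
    using n t by (smt (verit) mult_nonneg_nonneg)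
  define h where "h = t / real n"
  have h: "h \<ge> 0"
    using t n_pos by (simp add: h_def)
  define m where "m = exp (- c * h)"
  have diag: "m \<le> P h l l" for l
  proof -
    have "m \<le> exp (q l l * h)"
      using mult_right_mono[OF c[of l] h] by (simp add: m_def)
    also have "\<dots> \<le> P h l l"
      by (rule transition_function_diag_ge_exp[OF tf Q h])
    finally show ?thesis .
  qed
  have base: "0 \<le> 1 - 2 * c * t / real n"
    using n n_pos by (simp add: field_simps)
  have "1 - 2 * c * t / real n = 1 - 2 * (c * h)"
    by (simp add: h_def)
  also have "\<dots> \<le> 2 * m - 1"
    using exp_ge_add_one_self[of "- c * h"] by (simp add: m_def)
  finally have le: "1 - 2 * c * t / real n \<le> 2 * m - 1" .
  then have "(1 - 2 * c * t / real n) ^ n \<le> (2 * m - 1) ^ n"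
    using base by (intro power_mono)
  also have "\<dots> \<le> tv_dist (\<lambda>k. P (real n * h) i k) (\<lambda>k. P (real n * h) j k)"
    using le base by (intro tv_dist_rows_power[OF tf \<open>i \<noteq> j\<close> h _ diag]) simp
  finally show ?thesis
    using n_pos by (simp add: h_def)
qed

lemma tv_dist_rows_ge_exp:
  assumes tf: "transition_function P" and Q: "is_Q_matrix_of q P"
    and c: "\<And>l. - q l l \<le> c" and t: "t \<ge> 0" and "i \<noteq> j"
  shows "exp (- (2 * c * t)) \<le> tv_dist (\<lambda>k. P t i k) (\<lambda>k. P t j k)"
proof (rule exp_le_if_eventually_power_le)
  have "\<forall>\<^sub>F n in sequentially. 2 * c * t < real n"
    using filterlim_real_sequentially filterlim_at_top_dense by blast
  then show "\<forall>\<^sub>F n in sequentially. (1 + - (2 * c * t) / real n) ^ n \<le> tv_dist (\<lambda>k. P t i k) (\<lambda>k. P t j k)"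
    by (rule eventually_mono) (use tv_dist_rows_ge_power[OF tf Q c t \<open>i \<noteq> j\<close>] in simp)
qed

theorem mainTheorem10:
  fixes P :: "real \<Rightarrow> 'a::countable \<Rightarrow> 'a \<Rightarrow> real"
    and q :: "'a \<Rightarrow> 'a \<Rightarrow> real"
  assumes "transition_function P"
    and "is_Q_matrix_of q P"
    and "conservative q"
    and "bdd_above (range (\<lambda>i. - q i i))"
  shows "(\<forall>t\<ge>0. \<forall>i j. i \<noteq> j \<longrightarrow>
            tv_dist (\<lambda>k. P t i k) (\<lambda>k. P t j k) \<ge> exp (- t * Q_norm q)
            \<and> exp (- t * Q_norm q) > 0)
         \<and> Q_norm q = (SUP i. 2 * (- q i i))
         \<and> initial_state_identifiable P"
proof -
  note tf = assms(1) and Q = assms(2)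
  have Q_norm: "Q_norm q = (SUP i. 2 * (- q i i))"
    unfolding Q_norm_def Q_matrix_row_abs_sum[OF tf Q assms(3)] ..
  have "bdd_above (range (\<lambda>i. 2 * (- q i i)))"
    using assms(4) unfolding bdd_above_def by (metis (mono_tags) rangeE rangeI mult_left_mono zero_le_numeral)
  then have diag_bound: "- q l l \<le> Q_norm q / 2" for l
    using cSUP_upper[of l UNIV "\<lambda>i. 2 * (- q i i)"] by (simp add: Q_norm)
  have tv_bound: "exp (- t * Q_norm q) \<le> tv_dist (\<lambda>k. P t i k) (\<lambda>k. P t j k)"
    if "t \<ge> 0" "i \<noteq> j" for t i j
    using tv_dist_rows_ge_exp[OF tf Q diag_bound that] by (simp add: mult.commute)
  have "initial_state_identifiable P"
    unfolding initial_state_identifiable_def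
  proof (intro allI impI notI)
    fix t :: real and i j
    assume "t \<ge> 0" "i \<noteq> j" and "(\<lambda>k. P t i k) = (\<lambda>k. P t j k)"
    then have "exp (- t * Q_norm q) \<le> 0"
      using tv_bound[of t i j] by (simp add: tv_dist_def)
    then show False
      by simp
  qed
  with tv_bound Q_norm show ?thesis
    by simp
qed

end
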